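(* For every unit interval graph $G$ on $[n]$, $$Y_G=\sum_{D\in\mathcal A(G)}(-1)^{a(D)}\,e_1\uparrow_D .$$
   Context: Work in $\mathrm{NCSym}$ (symmetric functions in non-commuting variables $x_1,x_2,\dots$ over $\mathbb Q$); $e_1=p_1=x_1+x_2+\cdots$. A unit interval graph $G$ on $[n]$ is given by intervals $[a_1,1],\dots,[a_n,n]$ with $1\le a_1\le\cdots\le a_n$, $a_k\le k$; it has an edge between distinct $i,j$ whenever $i,j\in[a_k,k]$ for some $k$. $Y_G=\sum_\kappa x_{\kappa(1)}\cdots x_{\kappa(n)}$ over proper colorings $\kappa:[n]\to\{1,2,\dots\}$. Inducing: for $1\le j\le m-1$, $x_{i_1}\cdots x_{i_{m-1}}\uparrow_j^m=x_{i_1}\cdots x_{i_{m-1}}x_{i_j}$, extended linearly to homogeneous degree $m-1$ elements, and $f\uparrow_m^m=f\,p_1$. An arc diagram on $[n]$ is a set of arcs $(i,j)$ with $1\le i<j\le n$ such that each vertex $j$ is the right endpoint of at most one arc (its left arc). $\mathcal A(G)$ is the set of arc diagrams on $[n]$ all of whose arcs $(i,j)$ satisfy $i,j\in[a_k,k]$ for some $k$. For $D\in\mathcal A(G)$ let $a(D)$ be its number of arcs, and for $2\le j\le n$ let $i_j$ be the left endpoint of the left arc of $j$ if it exists, and $i_j=j$ otherwise; then $e_1\uparrow_D=e_1\uparrow_{i_2}^2\uparrow_{i_3}^3\cdots\uparrow_{i_n}^n$ (inducings applied successively from left to right). *)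

theory Defs
  imports Complex_Main
begin

text \<open>A homogeneous element of NCSym (a formal series in non-commuting variables
x_1, x_2, ...) is represented by its coefficient function on words: a word
x_{w_1} ... x_{w_m} is the list [w_1, ..., w_m] of positive naturals.
Coefficients of lists containing 0 (no variable x_0) are always 0.\<close>

type_synonym ncs = "nat list \<Rightarrow> rat"

definition pos_word :: "nat list \<Rightarrow> bool" where
  "pos_word w \<longleftrightarrow> (\<forall>c\<in>set w. 1 \<le> c)"

text \<open>e_1 = p_1 = x_1 + x_2 + ...\<close>
definition e1 :: ncs where
  "e1 w = (if length w = 1 \<and> pos_word w then 1 else 0)"

text \<open>Unit interval graph given by the left endpoints a_1..a_n (vertices 1..n).\<close>
definition unit_interval_data :: "nat \<Rightarrow> (nat \<Rightarrow> nat) \<Rightarrow> bool" where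
  "unit_interval_data n a \<longleftrightarrow>
     (\<forall>k\<in>{1..n}. 1 \<le> a k \<and> a k \<le> k) \<and> (\<forall>k. 1 \<le> k \<and> k < n \<longrightarrow> a k \<le> a (Suc k))"

definition same_interval :: "nat \<Rightarrow> (nat \<Rightarrow> nat) \<Rightarrow> nat \<Rightarrow> nat \<Rightarrow> bool" where
  "same_interval n a i j \<longleftrightarrow> (\<exists>k\<in>{1..n}. i \<in> {a k..k} \<and> j \<in> {a k..k})"

definition uig_edge :: "nat \<Rightarrow> (nat \<Rightarrow> nat) \<Rightarrow> nat \<Rightarrow> nat \<Rightarrow> bool" where
  "uig_edge n a i j \<longleftrightarrow> i \<noteq> j \<and> same_interval n a i j"

text \<open>Chromatic symmetric function in non-commuting variables: coefficient of the
word x_{kappa(1)} ... x_{kappa(n)} is 1 iff kappa is a proper colouring.\<close>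
definition YG :: "nat \<Rightarrow> (nat \<Rightarrow> nat) \<Rightarrow> ncs" where
  "YG n a w = (if length w = n \<and> pos_word w \<and>
      (\<forall>i\<in>{1..n}. \<forall>j\<in>{1..n}. uig_edge n a i j \<longrightarrow> w ! (i - 1) \<noteq> w ! (j - 1))
     then 1 else 0)"

text \<open>Inducing f (homogeneous of degree m-1) to degree m: for j < m,
x_{i_1}..x_{i_{m-1}} goes to x_{i_1}..x_{i_{m-1}} x_{i_j}; for j = m, f goes to f p_1.\<close>
definition induce :: "nat \<Rightarrow> nat \<Rightarrow> ncs \<Rightarrow> ncs" where
  "induce m j f w =
     (if length w = m \<and> 1 \<le> m \<and> 1 \<le> last w \<and> (j = m \<or> last w = w ! (j - 1))
      then f (butlast w) else 0)"

definition arc_diagram :: "nat \<Rightarrow> (nat \<times> nat) set \<Rightarrow> bool" where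
  "arc_diagram n D \<longleftrightarrow> D \<subseteq> {(i, j). 1 \<le> i \<and> i < j \<and> j \<le> n} \<and>
     (\<forall>i i' j. (i, j) \<in> D \<and> (i', j) \<in> D \<longrightarrow> i = i')"

definition arcs_of :: "nat \<Rightarrow> (nat \<Rightarrow> nat) \<Rightarrow> (nat \<times> nat) set set" where
  "arcs_of n a = {D. arc_diagram n D \<and> (\<forall>(i, j)\<in>D. same_interval n a i j)}"

definition left_end :: "(nat \<times> nat) set \<Rightarrow> nat \<Rightarrow> nat" where
  "left_end D j = (if \<exists>i. (i, j) \<in> D then (THE i. (i, j) \<in> D) else j)"

text \<open>e_1 induced along D: e_1 \<up>_{i_2}^2 \<up>_{i_3}^3 ... \<up>_{i_n}^n\<close>
definition e1_induced :: "nat \<Rightarrow> (nat \<times> nat) set \<Rightarrow> ncs" where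
  "e1_induced n D = foldl (\<lambda>f m. induce m (left_end D m) f) e1 [2..<Suc n]"

end

theory Submission
  imports Defs
begin

text \<open>Unfolding the inductions, e1\<up>D is the sum of all words of length n
that are constant along every arc of D. Hence the coefficient of a word w on the right-hand
side is the alternating sum of (-1)^a(D) over the arc diagrams of G that are
monochromatic for w. If w is a proper colouring only the empty diagram is monochromatic.
Otherwise let (i0, j0) be a monochromatic arc of G with least right endpoint; since the
vertices of an interval form a clique, i0 is the only possible monochromatic left partner of
j0, so toggling the arc (i0, j0) is a sign-reversing involution and the sum vanishes.\<close>

definition monochromatic_arcs :: "nat list \<Rightarrow> (nat \<times> nat) set \<Rightarrow> bool" where
  "monochromatic_arcs w D \<longleftrightarrow> (\<forall>(i, j)\<in>D. w ! (i - 1) = w ! (j - 1))"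

definition proper_word :: "nat \<Rightarrow> (nat \<Rightarrow> nat) \<Rightarrow> nat list \<Rightarrow> bool" where
  "proper_word n a w \<longleftrightarrow>
     (\<forall>i\<in>{1..n}. \<forall>j\<in>{1..n}. uig_edge n a i j \<longrightarrow> w ! (i - 1) \<noteq> w ! (j - 1))"

lemma YG_eq: "YG n a w = (if length w = n \<and> pos_word w \<and> proper_word n a w then 1 else 0)"
  unfolding YG_def proper_word_def by simp

lemma unit_interval_data_mono:
  assumes U: "unit_interval_data n a" and "1 \<le> k" "k \<le> k'" "k' \<le> n"
  shows "a k \<le> a k'"
  using assms(3,4)
proof (induction k' rule: dec_induct)
  case (step m)
  then have "a m \<le> a (Suc m)" using U assms(2) unfolding unit_interval_data_def by auto
  with step show ?case by simp
qed simp

lemma same_interval_common_right: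
  assumes U: "unit_interval_data n a"
    and "same_interval n a i j" "same_interval n a i' j" "i \<le> j" "i' \<le> j"
  shows "same_interval n a i i'"
proof -
  obtain k where k: "k \<in> {1..n}" "i \<in> {a k..k}" "j \<in> {a k..k}"
    using assms(2) unfolding same_interval_def by auto
  obtain k' where k': "k' \<in> {1..n}" "i' \<in> {a k'..k'}" "j \<in> {a k'..k'}"
    using assms(3) unfolding same_interval_def by auto
  show ?thesis
  proof (cases "k \<le> k'")
    case True
    then have "a k \<le> a k'" using unit_interval_data_mono[OF U] k k' by auto
    then show ?thesis unfolding same_interval_def using k k' assms by (intro bexI[of _ k]) auto
  next
    case False
    then have "a k' \<le> a k" using unit_interval_data_mono[OF U] k k' by auto
    then show ?thesis unfolding same_interval_def using k k' assms by (intro bexI[of _ k']) auto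
  qed
qed

lemma pos_word_snoc: "pos_word (v @ [x]) \<longleftrightarrow> pos_word v \<and> 1 \<le> x"
  unfolding pos_word_def by auto

lemma foldl_induce_e1:
  assumes "1 \<le> k" and L: "\<And>m. L m \<le> m"
  shows "foldl (\<lambda>f m. induce m (L m) f) e1 [2..<Suc k] w =
    (if length w = k \<and> pos_word w \<and> (\<forall>m\<in>{2..k}. L m = m \<or> w ! (m - 1) = w ! (L m - 1))
     then 1 else 0)"
  using assms(1)
proof (induction k arbitrary: w rule: dec_induct)
  case base
  then show ?case by (simp add: e1_def)
next
  case (step k)
  define F where "F = foldl (\<lambda>f m. induce m (L m) f) e1 [2..<Suc k]"
  have unfold: "foldl (\<lambda>f m. induce m (L m) f) e1 [2..<Suc (Suc k)] w = induce (Suc k) (L (Suc k)) F w"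
    using step(1) by (simp add: F_def)
  show ?case
  proof (cases "length w = Suc k")
    case False
    then show ?thesis unfolding unfold induce_def using step(1) by simp
  next
    case True
    then obtain v x where w: "w = v @ [x]" and lv: "length v = k"
      by (metis append_butlast_last_id length_0_conv length_butlast diff_Suc_1 nat.distinct(1))
    have prefix: "w ! (m - 1) = v ! (m - 1) \<and> w ! (L m - 1) = v ! (L m - 1)" if "m \<in> {2..k}" for m
      using that L[of m] w lv by (auto simp: nth_append)
    have last: "w ! (Suc k - 1) = x" using w lv by (simp add: nth_append)
    have split: "{2..Suc k} = insert (Suc k) {2..k}" using step(1) by auto
    have "induce (Suc k) (L (Suc k)) F w =
        (if 1 \<le> x \<and> (L (Suc k) = Suc k \<or> x = w ! (L (Suc k) - 1)) then F v else 0)"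
      unfolding induce_def using w lv by auto
    then show ?thesis
      unfolding unfold step.IH[folded F_def] split using True lv w last prefix pos_word_snoc
      by (auto simp del: One_nat_def)
  qed
qed

lemma left_end_arc:
  assumes "arc_diagram n D" "(i, j) \<in> D"
  shows "left_end D j = i"
  using assms unfolding left_end_def arc_diagram_def by (auto intro!: the_equality)

lemma left_end_le:
  assumes "arc_diagram n D"
  shows "left_end D m \<le> m"
proof (cases "\<exists>i. (i, m) \<in> D")
  case True
  then obtain i where i: "(i, m) \<in> D" by auto
  then show ?thesis using left_end_arc[OF assms i] assms unfolding arc_diagram_def by auto
qed (simp add: left_end_def)

lemma e1_induced_eq:
  assumes "1 \<le> n" "arc_diagram n D"
  shows "e1_induced n D w =
    (if length w = n \<and> pos_word w \<and> monochromatic_arcs w D then 1 else 0)"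
proof -
  have "(\<forall>m\<in>{2..n}. left_end D m = m \<or> w ! (m - 1) = w ! (left_end D m - 1)) \<longleftrightarrow>
        monochromatic_arcs w D"
  proof
    assume A: "\<forall>m\<in>{2..n}. left_end D m = m \<or> w ! (m - 1) = w ! (left_end D m - 1)"
    show "monochromatic_arcs w D"
      unfolding monochromatic_arcs_def
    proof clarify
      fix i j assume ij: "(i, j) \<in> D"
      then have "j \<in> {2..n}" "i \<noteq> j" using assms(2) unfolding arc_diagram_def by auto
      then show "w ! (i - 1) = w ! (j - 1)" using A left_end_arc[OF assms(2) ij] by metis
    qed
  next
    assume "monochromatic_arcs w D"
    then have "w ! (m - 1) = w ! (left_end D m - 1)" if "(i, m) \<in> D" for i m
      using left_end_arc[OF assms(2) that] that unfolding monochromatic_arcs_def by auto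
    then show "\<forall>m\<in>{2..n}. left_end D m = m \<or> w ! (m - 1) = w ! (left_end D m - 1)"
      unfolding left_end_def by metis
  qed
  then show ?thesis
    unfolding e1_induced_def using foldl_induce_e1[OF assms(1) left_end_le[OF assms(2)]] by simp
qed

lemma finite_arcs_of: "finite (arcs_of n a)"
  by (rule finite_subset[of _ "Pow ({1..n} \<times> {1..n})"])
     (auto simp: arcs_of_def arc_diagram_def)

lemma finite_arc_diagram: "arc_diagram n D \<Longrightarrow> finite D"
  by (rule finite_subset[of _ "{1..n} \<times> {1..n}"]) (auto simp: arc_diagram_def)

lemma sum_minus_one_power_card_toggle:
  fixes S :: "'a set set"
  assumes "finite S" "\<And>D. D \<in> S \<Longrightarrow> finite D"
    and ins: "\<And>D. D \<in> S \<Longrightarrow> e \<notin> D \<Longrightarrow> insert e D \<in> S"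
    and del: "\<And>D. D \<in> S \<Longrightarrow> e \<in> D \<Longrightarrow> D - {e} \<in> S"
  shows "(\<Sum>D\<in>S. (-1::'b::ring_1) ^ card D) = 0"
proof -
  let ?with = "{D\<in>S. e \<in> D}" and ?without = "{D\<in>S. e \<notin> D}"
  have image: "?with = insert e ` ?without"
  proof
    show "?with \<subseteq> insert e ` ?without"
    proof
      fix D assume "D \<in> ?with"
      then have "D - {e} \<in> ?without" "D = insert e (D - {e})" using del by auto
      then show "D \<in> insert e ` ?without" by blast
    qed
  qed (use ins in auto)
  have "inj_on (insert e) ?without"
    by (rule inj_onI) (metis Diff_insert_absorb mem_Collect_eq)
  then have "(\<Sum>D\<in>?with. (-1::'b) ^ card D) = (\<Sum>D\<in>?without. (-1) ^ card (insert e D))"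
    unfolding image by (rule sum.reindex[unfolded comp_def])
  also have "\<dots> = - (\<Sum>D\<in>?without. (-1) ^ card D)"
    by (simp add: sum_negf assms(2))
  finally have cancel: "(\<Sum>D\<in>?with. (-1::'b) ^ card D) = - (\<Sum>D\<in>?without. (-1) ^ card D)" .
  have "S = ?with \<union> ?without" by auto
  then have "(\<Sum>D\<in>S. (-1::'b) ^ card D) =
      (\<Sum>D\<in>?with. (-1) ^ card D) + (\<Sum>D\<in>?without. (-1) ^ card D)"
    using sum.union_disjoint[of ?with ?without] assms(1) by auto
  then show ?thesis by (simp add: cancel)
qed

lemma monochromatic_arcs_of_proper:
  assumes "proper_word n a w"
  shows "{D\<in>arcs_of n a. monochromatic_arcs w D} = {{}}"
proof -
  have "D = {}" if "D \<in> arcs_of n a" "monochromatic_arcs w D" for D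
  proof (rule ccontr)
    assume "D \<noteq> {}"
    then obtain i j where ij: "(i, j) \<in> D" by auto
    then have "same_interval n a i j" "1 \<le> i" "i < j" "j \<le> n" "w ! (i - 1) = w ! (j - 1)"
      using that unfolding arcs_of_def arc_diagram_def monochromatic_arcs_def by auto
    then show False using assms unfolding proper_word_def uig_edge_def by force
  qed
  then show ?thesis by (auto simp: arcs_of_def arc_diagram_def monochromatic_arcs_def)
qed

lemma least_monochromatic_arc:
  assumes U: "unit_interval_data n a" and "\<not> proper_word n a w"
  obtains i0 j0 where "1 \<le> i0" "i0 < j0" "j0 \<le> n" "same_interval n a i0 j0"
    "w ! (i0 - 1) = w ! (j0 - 1)"
    "\<And>i. i < j0 \<Longrightarrow> same_interval n a i j0 \<Longrightarrow> w ! (i - 1) = w ! (j0 - 1) \<Longrightarrow> i = i0"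
proof -
  define M where "M = {(i, j). i < j \<and> same_interval n a i j \<and> w ! (i - 1) = w ! (j - 1)}"
  obtain i j where ij: "uig_edge n a i j" "w ! (i - 1) = w ! (j - 1)"
    using assms(2) unfolding proper_word_def by auto
  then have "(min i j, max i j) \<in> M"
    unfolding M_def uig_edge_def same_interval_def by (auto simp: min_def max_def)
  then have "\<exists>i'. (i', max i j) \<in> M" by blast
  then have "\<exists>i. (i, LEAST j. \<exists>i. (i, j) \<in> M) \<in> M"
    by (rule LeastI[where P = "\<lambda>j. \<exists>i. (i, j) \<in> M"])
  then obtain i0 j0 where e: "(i0, j0) \<in> M" and j0: "j0 = (LEAST j. \<exists>i. (i, j) \<in> M)" by blast
  have least: "(i, j) \<notin> M" if "j < j0" for i j
    using that not_less_Least unfolding j0 by blast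
  have e_props: "i0 < j0" "same_interval n a i0 j0" "w ! (i0 - 1) = w ! (j0 - 1)"
    using e unfolding M_def by auto
  have unique: "i = i0" if "i < j0" "same_interval n a i j0" "w ! (i - 1) = w ! (j0 - 1)" for i
  proof (rule linorder_cases[of i i0])
    have "same_interval n a i i0"
      using same_interval_common_right[OF U that(2) e_props(2)] that(1) e_props(1) by simp
    moreover assume "i < i0"
    ultimately have "(i, i0) \<in> M" using that e_props unfolding M_def by simp
    then show ?thesis using least e_props(1) by blast
  next
    show "i = i0 \<Longrightarrow> i = i0" .
  next
    have "same_interval n a i0 i"
      using same_interval_common_right[OF U e_props(2) that(2)] that(1) e_props(1) by simp
    moreover assume "i0 < i"
    ultimately have "(i0, i) \<in> M" using that e_props unfolding M_def by simp
    then show ?thesis using least that(1) by blast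
  qed
  obtain k where k: "k \<in> {1..n}" "i0 \<in> {a k..k}" "j0 \<in> {a k..k}"
    using e_props(2) unfolding same_interval_def by blast
  moreover have "1 \<le> a k" using k(1) U unfolding unit_interval_data_def by blast
  ultimately have "1 \<le> i0" "j0 \<le> n" by auto
  then show thesis using that e_props unique by blast
qed

lemma sum_monochromatic_arcs_of_improper:
  assumes U: "unit_interval_data n a" and "\<not> proper_word n a w"
  shows "(\<Sum>D\<in>{D\<in>arcs_of n a. monochromatic_arcs w D}. (-1::rat) ^ card D) = 0"
proof -
  obtain i0 j0 where e: "1 \<le> i0" "i0 < j0" "j0 \<le> n" "same_interval n a i0 j0"
    "w ! (i0 - 1) = w ! (j0 - 1)"
    and unique: "\<And>i. i < j0 \<Longrightarrow> same_interval n a i j0 \<Longrightarrow> w ! (i - 1) = w ! (j0 - 1) \<Longrightarrow> i = i0"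
    using least_monochromatic_arc[OF assms] by blast
  show ?thesis
  proof (rule sum_minus_one_power_card_toggle[where e = "(i0, j0)"])
    fix D assume D: "D \<in> {D\<in>arcs_of n a. monochromatic_arcs w D}"
    then show "finite D" using finite_arc_diagram unfolding arcs_of_def by blast
    show "D - {(i0, j0)} \<in> {D\<in>arcs_of n a. monochromatic_arcs w D}"
      using D unfolding arcs_of_def arc_diagram_def monochromatic_arcs_def by auto
    have "i = i0" if "(i, j0) \<in> D" for i
      by (rule unique) (use D that in \<open>auto simp: arcs_of_def arc_diagram_def monochromatic_arcs_def\<close>)
    then show "insert (i0, j0) D \<in> {D\<in>arcs_of n a. monochromatic_arcs w D}"
      using D e unfolding arcs_of_def arc_diagram_def monochromatic_arcs_def by (auto, blast)
  qed (simp add: finite_arcs_of)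
qed

theorem mainTheorem3:
  fixes n :: nat and a :: "nat \<Rightarrow> nat"
  assumes "1 \<le> n" and "unit_interval_data n a"
  shows "YG n a = (\<lambda>w. \<Sum>D\<in>arcs_of n a. (-1) ^ card D * e1_induced n D w)"
proof
  fix w
  have "(\<Sum>D\<in>arcs_of n a. (-1) ^ card D * e1_induced n D w) =
      (\<Sum>D\<in>arcs_of n a. if length w = n \<and> pos_word w \<and> monochromatic_arcs w D
                        then (-1) ^ card D else 0)"
    using e1_induced_eq[OF assms(1)] by (intro sum.cong) (auto simp: arcs_of_def)
  also have "\<dots> = (if length w = n \<and> pos_word w
      then \<Sum>D\<in>{D\<in>arcs_of n a. monochromatic_arcs w D}. (-1) ^ card D else 0)"
    by (cases "length w = n \<and> pos_word w") (auto simp: sum.inter_filter finite_arcs_of)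
  also have "\<dots> = YG n a w"
    using monochromatic_arcs_of_proper sum_monochromatic_arcs_of_improper[OF assms(2)]
    by (simp add: YG_eq)
  finally show "YG n a w = (\<Sum>D\<in>arcs_of n a. (-1) ^ card D * e1_induced n D w)" ..
qed

end
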